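(* (1) Let $t,y_2,y_3,y_4,\dots$ be independent indeterminates and set $y_0=t$, $y_1=1$, and $y_{-i}=-y_i$ for all $i\ge1$ (so $y_{-1}=-1$). For integers $a\le b$ write $Q(a,b)=P(\tilde T_a\cup\dots\cup\tilde T_b)/(y_ay_{a+1}\cdots y_b)$. Then: (a) for every $j\ge0$, $\lim_{t\to0}Q(-j,j+1)=y_{j+2}$ (i.e. the graph $H_j=\tilde T_{-j}\cup\dots\cup\tilde T_{j+1}$, with an even number of tiles centered at $\tilde T_0\cup\tilde T_1$, corresponds to $y_{j+2}$); (b) for every $k\ge0$, $\lim_{t\to0}Q(1-k,1+k)=1$ (any graph with an odd number of tiles centered at $\tilde T_1$ corresponds to $1$). (2) Analogously, fix an integer $N$, let $s$ and $y_k$ ($k\le N-1$) be independent indeterminates, and set $y_N=1$, $y_{N+1}=s$, $y_{N+1+k}=-y_{N+1-k}$ for all $k\ge1$. Then for every $k\ge0$, $\lim_{s\to0}P(\tilde T_{N-k}\cup\dots\cup\tilde T_{N+k})/(y_{N-k}\cdots y_{N+k})=1$ (any graph with an odd number of tiles centered at $\tilde T_N$ corresponds to $1$).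
   Context: For $k\in\mathbb{Z}$, the tile $\tilde T_k$ is a square whose northern edge has weight $y_{k+1}$, southern edge weight $y_{k-1}$, and eastern and western edges weight $1$. For $a\le b$, $\tilde T_a\cup\dots\cup\tilde T_b$ denotes the ladder graph of the tiles $\tilde T_a,\dots,\tilde T_b$ in this order: vertices $u_0,\dots,u_m,v_0,\dots,v_m$ with $m=b-a+1$, edges $u_{k-1}u_k$ of weight $y_{a+k}$ (north edge of $\tilde T_{a+k-1}$), $v_{k-1}v_k$ of weight $y_{a+k-2}$ (south edge of $\tilde T_{a+k-1}$), for $1\le k\le m$, and $u_kv_k$ of weight $1$ for $0\le k\le m$. $P(G)=\sum_M\prod_{e\in M}w_e$ over perfect matchings $M$ of $G$. The limits are taken after substituting the given specializations; the variables $y_0$ (resp. $y_{N+1}$) are kept as the formal variable $t$ (resp. $s$) and sent to $0$ at the end. *)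

theory Defs
  imports Complex_Main
begin

text \<open>Ladder graph of m tiles: vertex (True,k) is u_k, (False,k) is v_k, 0 <= k <= m.\<close>

definition ladder_V :: "nat \<Rightarrow> (bool \<times> nat) set" where
  "ladder_V m = {(b, k). k \<le> m}"

definition ladder_E :: "nat \<Rightarrow> (bool \<times> nat) set set" where
  "ladder_E m =
     {{(True, k - 1), (True, k)} | k. 1 \<le> k \<and> k \<le> m}
   \<union> {{(False, k - 1), (False, k)} | k. 1 \<le> k \<and> k \<le> m}
   \<union> {{(True, k), (False, k)} | k. k \<le> m}"

text \<open>Edge weights of the ladder of tiles T_a,...,T_(a+m-1): u_(k-1)u_k has weight y_(a+k),
  v_(k-1)v_k has weight y_(a+k-2), u_k v_k has weight 1. (The edges are pairwise distinct,
  so exactly one summand is non-zero for an edge.)\<close>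
definition ladder_wt :: "(int \<Rightarrow> real) \<Rightarrow> int \<Rightarrow> nat \<Rightarrow> (bool \<times> nat) set \<Rightarrow> real" where
  "ladder_wt y a m e =
     (\<Sum>k\<in>{1..m}. if e = {(True, k - 1), (True, k)} then y (a + int k) else 0)
   + (\<Sum>k\<in>{1..m}. if e = {(False, k - 1), (False, k)} then y (a + int k - 2) else 0)
   + (\<Sum>k\<in>{0..m}. if e = {(True, k), (False, k)} then 1 else 0)"

definition perfect_matchings :: "nat \<Rightarrow> (bool \<times> nat) set set set" where
  "perfect_matchings m =
     {M. M \<subseteq> ladder_E m \<and> (\<forall>v\<in>ladder_V m. \<exists>!e. e \<in> M \<and> v \<in> e)}"

definition P_ladder :: "(int \<Rightarrow> real) \<Rightarrow> int \<Rightarrow> int \<Rightarrow> real" where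
  "P_ladder y a b = (let m = nat (b - a + 1) in
     \<Sum>M\<in>perfect_matchings m. \<Prod>e\<in>M. ladder_wt y a m e)"

definition Q_ladder :: "(int \<Rightarrow> real) \<Rightarrow> int \<Rightarrow> int \<Rightarrow> real" where
  "Q_ladder y a b = P_ladder y a b / (\<Prod>i\<in>{a..b}. y i)"

definition spec1 :: "(nat \<Rightarrow> real) \<Rightarrow> real \<Rightarrow> int \<Rightarrow> real" where
  "spec1 f t i =
     (if i = 0 then t
      else if i = 1 then 1
      else if i \<ge> 2 then f (nat i)
      else if i = -1 then -1
      else - f (nat (- i)))"

definition spec2 :: "int \<Rightarrow> (int \<Rightarrow> real) \<Rightarrow> real \<Rightarrow> int \<Rightarrow> real" where
  "spec2 N g s i =
     (if i \<le> N - 1 then g i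
      else if i = N then 1
      else if i = N + 1 then s
      else if i = N + 2 then -1
      else - g (2 * N + 2 - i))"

end

theory Submission
  imports Defs
begin

text \<open>Deleting the last rung, or the last north and south edges, of a ladder shows that
  \<open>P(T_a \<union> \<dots> \<union> T_b)\<close> is the continuant of the entries \<open>c_i = y_(i+1) y_(i-1)\<close>, \<open>a \<le> i \<le> b\<close>.
  Under specialization (1) with \<open>y_0 = t\<close> the entries are even in \<open>i\<close> except at the centre,
  where they read \<open>-t y_2, -1, t y_2\<close>. For such a mirrored list the continuant identity
  \<open>K(V) K(V' W) - K(V') K(V W) = \<plusminus>\<Prod>V (K(W') - K(W))\<close> (primes drop the first entry)
  kills the constant term, so the continuant is \<open>t \<alpha> + t\<^sup>2 \<beta>\<close>, while the denominator contains
  \<open>y_0 = t\<close> exactly once. Hence \<open>Q\<close> is affine in \<open>t\<close> and its limit is read off.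
  Specialization (2) is the reflection \<open>i \<mapsto> N + 1 - i\<close> of specialization (1).\<close>

section \<open>Continuants\<close>

fun continuant :: "'a::comm_ring_1 list \<Rightarrow> 'a" where
  "continuant [] = 1"
| "continuant [x] = 1 + x"
| "continuant (x # y # zs) = continuant (y # zs) + x * continuant zs"

lemma continuant_Cons: "continuant (x # xs) = continuant xs + x * continuant (tl xs)"
  by (cases xs) auto

lemma continuant_append_Cons:
  "continuant (xs @ p # ys) =
     continuant xs * continuant ys + p * continuant (butlast xs) * continuant (tl ys)"
  by (induction xs rule: continuant.induct) (simp_all add: continuant_Cons algebra_simps)

lemma continuant_snoc: "continuant (xs @ [z]) = continuant xs + z * continuant (butlast xs)"
  using continuant_append_Cons[of xs z "[]"] by simp

lemma continuant_snoc_snoc: "continuant (xs @ [p, q]) = continuant (xs @ [p]) + q * continuant xs"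
  using continuant_snoc[of "xs @ [p]" q] by simp

lemma continuant_rev: "continuant (rev xs) = continuant xs"
proof (induction xs rule: length_induct)
  case (1 xs)
  show ?case
  proof (cases xs)
    case (Cons x ys)
    have "continuant (rev xs) = continuant (rev ys) + x * continuant (rev (tl ys))"
      using Cons by (simp add: continuant_snoc butlast_rev)
    also have "\<dots> = continuant xs"
      using 1 Cons by (simp add: continuant_Cons)
    finally show ?thesis .
  qed simp
qed

lemma continuant_casoratian:
  "continuant V * continuant (tl (V @ W)) - continuant (tl V) * continuant (V @ W) =
     (-1) ^ length V * prod_list V * (continuant (tl W) - continuant W)"
proof (induction V)
  case (Cons x V)
  have "continuant (x # V) * continuant (tl ((x # V) @ W))
          - continuant (tl (x # V)) * continuant ((x # V) @ W)
      = - x * (continuant V * continuant (tl (V @ W)) - continuant (tl V) * continuant (V @ W))"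
    by (simp add: continuant_Cons algebra_simps)
  then show ?case
    using Cons.IH by simp
qed simp

lemma continuant_mirrored:
  "continuant (rev V @ [- z, -1, z] @ V @ W) =
     (-1) ^ (length V + 1) * z * prod_list V * (continuant W - continuant (tl W))
     - z\<^sup>2 * continuant (tl V) * continuant (tl (V @ W))"
proof -
  have "continuant (rev V @ [- z, -1, z] @ V @ W) =
      continuant (rev V @ [- z]) * continuant (z # V @ W)
      - continuant (rev V) * continuant (V @ W)"
    using continuant_append_Cons[of "rev V @ [- z]" "-1" "z # V @ W"] by simp
  also have "\<dots> = z * (continuant V * continuant (tl (V @ W)) - continuant (tl V) * continuant (V @ W))
      - z\<^sup>2 * continuant (tl V) * continuant (tl (V @ W))"
    by (simp add: continuant_snoc continuant_Cons continuant_rev butlast_rev algebra_simps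
        power2_eq_square)
  finally show ?thesis
    by (simp add: continuant_casoratian algebra_simps)
qed

lemma upto_eq_map_upt: "[a..b] = map (\<lambda>k. a + int k) [0..<nat (b - a + 1)]"
  by (rule nth_equalityI) auto

lemma map_upto_reflect: "map (\<lambda>i. h (r - i)) [a..b] = rev (map h [r - b..r - a])"
proof (rule nth_equalityI)
  fix k assume "k < length (map (\<lambda>i. h (r - i)) [a..b])"
  then have k: "int k < b - a + 1"
    by simp
  then have "r - b + int (nat (b - a + 1) - Suc k) = r - (a + int k)"
    by (simp add: of_nat_diff)
  with k show "map (\<lambda>i. h (r - i)) [a..b] ! k = rev (map h [r - b..r - a]) ! k"
    by (simp add: rev_nth algebra_simps)
qed simp

lemma upto_append:
  assumes "i \<le> j + 1" and "j \<le> k"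
  shows "[i..j] @ [j + 1..k] = [i..k]"
proof (cases "i \<le> j")
  case True
  then show ?thesis
    using upto_split2[OF True \<open>j \<le> k\<close>] by simp
next
  case False
  with \<open>i \<le> j + 1\<close> have "i = j + 1"
    by simp
  then show ?thesis
    by simp
qed

lemma tl_upto: "tl [i..j] = [i + 1..j]"
  by (cases "i \<le> j") (simp_all add: upto_rec1)

lemma prod_list_map_uminus:
  fixes f :: "'b \<Rightarrow> 'a::comm_ring_1"
  shows "prod_list (map (\<lambda>x. - f x) xs) = (-1) ^ length xs * prod_list (map f xs)"
  by (induction xs) simp_all

section \<open>Perfect matchings of the ladder\<close>

definition rung :: "nat \<Rightarrow> (bool \<times> nat) set" where
  "rung k = {(True, k), (False, k)}"

definition north_edge :: "nat \<Rightarrow> (bool \<times> nat) set" where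
  "north_edge k = {(True, k - 1), (True, k)}"

definition south_edge :: "nat \<Rightarrow> (bool \<times> nat) set" where
  "south_edge k = {(False, k - 1), (False, k)}"

lemma mem_rung [simp]: "(b, i) \<in> rung k \<longleftrightarrow> i = k"
  by (cases b) (auto simp: rung_def)

lemma mem_north_edge [simp]: "(b, i) \<in> north_edge k \<longleftrightarrow> b \<and> (i = k - 1 \<or> i = k)"
  by (auto simp: north_edge_def)

lemma mem_south_edge [simp]: "(b, i) \<in> south_edge k \<longleftrightarrow> \<not> b \<and> (i = k - 1 \<or> i = k)"
  by (auto simp: south_edge_def)

lemma ladder_edges_distinct [simp]:
  "rung k \<noteq> north_edge j" "north_edge j \<noteq> rung k"
  "rung k \<noteq> south_edge j" "south_edge j \<noteq> rung k"
  "north_edge k \<noteq> south_edge j" "south_edge j \<noteq> north_edge k"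
  by (metis mem_rung mem_north_edge mem_south_edge)+

lemma rung_eq_iff [simp]: "rung k = rung j \<longleftrightarrow> k = j"
  by (metis mem_rung)

lemma north_edge_eq_iff [simp]: "1 \<le> k \<Longrightarrow> 1 \<le> j \<Longrightarrow> north_edge k = north_edge j \<longleftrightarrow> k = j"
  by (metis diff_le_self le_antisym mem_north_edge)

lemma south_edge_eq_iff [simp]: "1 \<le> k \<Longrightarrow> 1 \<le> j \<Longrightarrow> south_edge k = south_edge j \<longleftrightarrow> k = j"
  by (metis diff_le_self le_antisym mem_south_edge)

lemma ladder_E_eq:
  "ladder_E m = north_edge ` {1..m} \<union> south_edge ` {1..m} \<union> rung ` {0..m}"
  unfolding ladder_E_def north_edge_def south_edge_def rung_def by auto

lemma mem_ladder_V [simp]: "v \<in> ladder_V m \<longleftrightarrow> snd v \<le> m"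
  by (cases v) (auto simp: ladder_V_def)

lemma ladder_edge_vertex_le: "e \<in> ladder_E m \<Longrightarrow> (b, i) \<in> e \<Longrightarrow> i \<le> m"
  unfolding ladder_E_eq by auto

lemma ladder_E_mono: "e \<in> ladder_E n \<Longrightarrow> n \<le> m \<Longrightarrow> e \<in> ladder_E m"
  unfolding ladder_E_eq by auto

lemma ladder_E_restrict:
  assumes "e \<in> ladder_E m" and "\<And>b i. (b, i) \<in> e \<Longrightarrow> i \<le> n"
  shows "e \<in> ladder_E n"
  using assms unfolding ladder_E_eq
  by (auto simp: image_iff) (metis mem_north_edge mem_south_edge mem_rung)+

lemma ladder_edge_nonempty: "e \<in> ladder_E m \<Longrightarrow> \<exists>b i. (b, i) \<in> e"
  unfolding ladder_E_eq by auto

lemma vertices_north_south_edge: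
  "(\<exists>s\<in>{north_edge (Suc (Suc n)), south_edge (Suc (Suc n))}. (b, i) \<in> s) \<longleftrightarrow>
     n < i \<and> i \<le> Suc (Suc n)"
  by (cases b) auto

lemma finite_ladder_E: "finite (ladder_E m)"
  unfolding ladder_E_eq by simp

lemma perfect_matchingsD:
  assumes "M \<in> perfect_matchings m"
  shows "M \<subseteq> ladder_E m" and "i \<le> m \<Longrightarrow> \<exists>e\<in>M. (b, i) \<in> e"
    and "i \<le> m \<Longrightarrow> e \<in> M \<Longrightarrow> e' \<in> M \<Longrightarrow> (b, i) \<in> e \<Longrightarrow> (b, i) \<in> e'
      \<Longrightarrow> e = e'"
proof -
  have "\<exists>!e. e \<in> M \<and> (b, i) \<in> e" if "i \<le> m"
    using assms that unfolding perfect_matchings_def by auto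
  then show "M \<subseteq> ladder_E m" and "i \<le> m \<Longrightarrow> \<exists>e\<in>M. (b, i) \<in> e"
    and "i \<le> m \<Longrightarrow> e \<in> M \<Longrightarrow> e' \<in> M \<Longrightarrow> (b, i) \<in> e \<Longrightarrow> (b, i) \<in> e'
      \<Longrightarrow> e = e'"
    using assms unfolding perfect_matchings_def by blast+
qed

lemma perfect_matchingsI:
  assumes "M \<subseteq> ladder_E m"
    and "\<And>b i. i \<le> m \<Longrightarrow> \<exists>e\<in>M. (b, i) \<in> e"
    and "\<And>b i e e'. i \<le> m \<Longrightarrow> e \<in> M \<Longrightarrow> e' \<in> M \<Longrightarrow> (b, i) \<in> e \<Longrightarrow> (b, i) \<in> e'
      \<Longrightarrow> e = e'"
  shows "M \<in> perfect_matchings m"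
  unfolding perfect_matchings_def
proof (intro CollectI conjI ballI)
  fix v assume "v \<in> ladder_V m"
  then obtain b i where "v = (b, i)" "i \<le> m"
    by (cases v) auto
  then show "\<exists>!e. e \<in> M \<and> v \<in> e"
    using assms(2,3) by blast
qed fact

lemma finite_perfect_matchings: "finite (perfect_matchings m)"
proof (rule finite_subset)
  show "perfect_matchings m \<subseteq> Pow (ladder_E m)"
    by (auto dest: perfect_matchingsD(1))
qed (simp add: finite_ladder_E)

lemma finite_perfect_matching: "M \<in> perfect_matchings m \<Longrightarrow> finite M"
  using perfect_matchingsD(1) finite_ladder_E finite_subset by blast

lemma perfect_matching_Diff:
  assumes M: "M \<in> perfect_matchings m" and "n \<le> m" and "S \<subseteq> M"
    and S: "\<And>b i. (\<exists>s\<in>S. (b, i) \<in> s) \<longleftrightarrow> n < i \<and> i \<le> m"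
  shows "M - S \<in> perfect_matchings n"
proof (rule perfect_matchingsI)
  show "M - S \<subseteq> ladder_E n"
  proof
    fix e assume e: "e \<in> M - S"
    show "e \<in> ladder_E n"
    proof (rule ladder_E_restrict)
      show e_edge: "e \<in> ladder_E m"
        using e perfect_matchingsD(1)[OF M] by blast
      fix b i assume bi: "(b, i) \<in> e"
      then have "i \<le> m"
        using e_edge ladder_edge_vertex_le by blast
      show "i \<le> n"
      proof (rule ccontr)
        assume "\<not> i \<le> n"
        with S[of b i] \<open>i \<le> m\<close> obtain s where "s \<in> S" "(b, i) \<in> s"
          by auto
        with perfect_matchingsD(3)[OF M \<open>i \<le> m\<close>, of e s] e bi \<open>S \<subseteq> M\<close> show False
          by blast
      qed
    qed
  qed
next
  fix b i assume "i \<le> n"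
  with \<open>n \<le> m\<close> obtain e where "e \<in> M" "(b, i) \<in> e"
    using perfect_matchingsD(2)[OF M, of i b] by auto
  moreover have "e \<notin> S"
    using S[of b i] \<open>i \<le> n\<close> \<open>(b, i) \<in> e\<close> by auto
  ultimately show "\<exists>e\<in>M - S. (b, i) \<in> e"
    by blast
next
  fix b i e e' assume "i \<le> n" "e \<in> M - S" "e' \<in> M - S" "(b, i) \<in> e" "(b, i) \<in> e'"
  with \<open>n \<le> m\<close> show "e = e'"
    using perfect_matchingsD(3)[OF M, of i e e' b] by simp
qed

lemma perfect_matching_Un:
  assumes M: "M \<in> perfect_matchings n" and "n \<le> m" and "S \<subseteq> ladder_E m"
    and S: "\<And>b i. (\<exists>s\<in>S. (b, i) \<in> s) \<longleftrightarrow> n < i \<and> i \<le> m"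
    and disjoint: "\<And>s s' b i. s \<in> S \<Longrightarrow> s' \<in> S \<Longrightarrow> (b, i) \<in> s \<Longrightarrow> (b, i) \<in> s'
      \<Longrightarrow> s = s'"
  shows "M \<union> S \<in> perfect_matchings m"
proof (rule perfect_matchingsI)
  show "M \<union> S \<subseteq> ladder_E m"
    using perfect_matchingsD(1)[OF M] ladder_E_mono \<open>n \<le> m\<close> \<open>S \<subseteq> ladder_E m\<close> by blast
next
  fix b i assume "i \<le> m"
  show "\<exists>e\<in>M \<union> S. (b, i) \<in> e"
  proof (cases "i \<le> n")
    case True
    then show ?thesis
      using perfect_matchingsD(2)[OF M, of i b] by blast
  next
    case False
    then show ?thesis
      using S[of b i] \<open>i \<le> m\<close> by auto
  qed
next
  have low: "i \<le> n" if "e \<in> M" "(b, i) \<in> e" for e b i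
    using that perfect_matchingsD(1)[OF M] ladder_edge_vertex_le by blast
  have high: "n < i" if "s \<in> S" "(b, i) \<in> s" for s b i
    using that S[of b i] by auto
  fix b i e e' assume e: "e \<in> M \<union> S" and e': "e' \<in> M \<union> S"
    and v: "(b, i) \<in> e" "(b, i) \<in> e'"
  show "e = e'"
  proof (cases "e \<in> M")
    case True
    then have "i \<le> n"
      using low v(1) by blast
    then have "e' \<in> M"
      using e' high[of e' b i] v(2) by auto
    with True v \<open>i \<le> n\<close> \<open>n \<le> m\<close> show ?thesis
      using perfect_matchingsD(3)[OF M, of i e e' b] by simp
  next
    case False
    then have "e \<in> S"
      using e by blast
    then have "e' \<in> S"
      using e' low[of e' b i] high[of e b i] v by auto
    with \<open>e \<in> S\<close> v show ?thesis
      using disjoint[of e e' b i] by blast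
  qed
qed

lemma rung_0_perfect_matching: "{rung 0} \<in> perfect_matchings 0"
  by (rule perfect_matchingsI) (simp_all add: ladder_E_eq)

lemma perfect_matchings_0: "perfect_matchings 0 = {{rung 0}}"
proof (intro equalityI subsetI)
  fix M assume M: "M \<in> perfect_matchings 0"
  then have "M \<subseteq> {rung 0}"
    using perfect_matchingsD(1)[OF M] by (simp add: ladder_E_eq)
  moreover have "M \<noteq> {}"
    using perfect_matchingsD(2)[OF M, of 0 True] by auto
  ultimately show "M \<in> {{rung 0}}"
    by auto
qed (simp add: rung_0_perfect_matching)

lemma north_south_edge_if_rung_notin:
  assumes M: "M \<in> perfect_matchings (Suc n)" and "rung (Suc n) \<notin> M"
  shows "north_edge (Suc n) \<in> M" and "south_edge (Suc n) \<in> M"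
proof -
  have last: "e = rung (Suc n) \<or> e = north_edge (Suc n) \<or> e = south_edge (Suc n)"
    if "e \<in> M" "(b, Suc n) \<in> e" for e b
  proof -
    have "e \<in> ladder_E (Suc n)"
      using that(1) perfect_matchingsD(1)[OF M] by blast
    with that(2) show ?thesis
      unfolding ladder_E_eq by auto
  qed
  obtain e where "e \<in> M" "(True, Suc n) \<in> e"
    using perfect_matchingsD(2)[OF M, of "Suc n" True] by blast
  with last[of e True] \<open>rung (Suc n) \<notin> M\<close> show "north_edge (Suc n) \<in> M"
    by auto
  obtain e' where "e' \<in> M" "(False, Suc n) \<in> e'"
    using perfect_matchingsD(2)[OF M, of "Suc n" False] by blast
  with last[of e' False] \<open>rung (Suc n) \<notin> M\<close> show "south_edge (Suc n) \<in> M"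
    by auto
qed

lemma perfect_matchings_1: "perfect_matchings 1 = {{rung 0, rung 1}, {north_edge 1, south_edge 1}}"
proof (intro equalityI subsetI)
  fix M assume M: "M \<in> perfect_matchings 1"
  show "M \<in> {{rung 0, rung 1}, {north_edge 1, south_edge 1}}"
  proof (cases "rung 1 \<in> M")
    case True
    have "M - {rung 1} \<in> perfect_matchings 0"
      using True by (intro perfect_matching_Diff[OF M]) auto
    then show ?thesis
      using True by (auto simp: perfect_matchings_0)
  next
    case False
    then have ns: "north_edge 1 \<in> M" "south_edge 1 \<in> M"
      using north_south_edge_if_rung_notin[of M 0] M by simp_all
    have "e \<in> {north_edge 1, south_edge 1}" if "e \<in> M" for e
    proof -
      obtain b i where "(b, i) \<in> e"
        using \<open>e \<in> M\<close> perfect_matchingsD(1)[OF M] ladder_edge_nonempty by blast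
      moreover from this have "i \<le> 1"
        using \<open>e \<in> M\<close> perfect_matchingsD(1)[OF M] ladder_edge_vertex_le by blast
      ultimately show ?thesis
        using perfect_matchingsD(3)[OF M _ \<open>e \<in> M\<close>] ns by (cases b) fastforce+
    qed
    then show ?thesis
      using ns by blast
  qed
next
  fix M assume "M \<in> {{rung 0, rung 1}, {north_edge 1, south_edge 1}}"
  moreover have "{rung 0} \<union> {rung 1} \<in> perfect_matchings 1"
    by (rule perfect_matching_Un) (auto simp: perfect_matchings_0 ladder_E_eq)
  moreover have "{north_edge 1, south_edge 1} \<in> perfect_matchings 1"
  proof (rule perfect_matchingsI)
    fix b and i :: nat assume "i \<le> 1"
    then show "\<exists>e\<in>{north_edge 1, south_edge 1}. (b, i) \<in> e"
      by (cases b) auto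
  qed (auto simp: ladder_E_eq)
  ultimately show "M \<in> perfect_matchings 1"
    by (auto simp: insert_commute)
qed

lemma perfect_matchings_Suc_Suc:
  "perfect_matchings (Suc (Suc n)) =
     insert (rung (Suc (Suc n))) ` perfect_matchings (Suc n)
     \<union> (\<lambda>M. M \<union> {north_edge (Suc (Suc n)), south_edge (Suc (Suc n))}) ` perfect_matchings n"
  (is "_ = ?R ` _ \<union> ?NS ` _")
proof (intro equalityI subsetI)
  fix M assume M: "M \<in> perfect_matchings (Suc (Suc n))"
  show "M \<in> ?R ` perfect_matchings (Suc n) \<union> ?NS ` perfect_matchings n"
  proof (cases "rung (Suc (Suc n)) \<in> M")
    case True
    then have "M - {rung (Suc (Suc n))} \<in> perfect_matchings (Suc n)"
      by (intro perfect_matching_Diff[OF M]) auto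
    moreover have "M = ?R (M - {rung (Suc (Suc n))})"
      using True by blast
    ultimately show ?thesis
      by blast
  next
    case False
    then have ns: "north_edge (Suc (Suc n)) \<in> M" "south_edge (Suc (Suc n)) \<in> M"
      using north_south_edge_if_rung_notin[OF M] by simp_all
    then have "M - {north_edge (Suc (Suc n)), south_edge (Suc (Suc n))} \<in> perfect_matchings n"
      by (intro perfect_matching_Diff[OF M]) (auto simp: vertices_north_south_edge)
    moreover have "M = ?NS (M - {north_edge (Suc (Suc n)), south_edge (Suc (Suc n))})"
      using ns by blast
    ultimately show ?thesis
      by blast
  qed
next
  fix M assume "M \<in> ?R ` perfect_matchings (Suc n) \<union> ?NS ` perfect_matchings n"
  then show "M \<in> perfect_matchings (Suc (Suc n))"
  proof
    assume "M \<in> ?R ` perfect_matchings (Suc n)"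
    then obtain M' where M': "M' \<in> perfect_matchings (Suc n)" and "M = M' \<union> {rung (Suc (Suc n))}"
      by blast
    moreover have "M' \<union> {rung (Suc (Suc n))} \<in> perfect_matchings (Suc (Suc n))"
      by (rule perfect_matching_Un[OF M']) (auto simp: ladder_E_eq)
    ultimately show ?thesis
      by simp
  next
    assume "M \<in> ?NS ` perfect_matchings n"
    then obtain M' where M': "M' \<in> perfect_matchings n" and "M = ?NS M'"
      by blast
    moreover have "?NS M' \<in> perfect_matchings (Suc (Suc n))"
      by (rule perfect_matching_Un[OF M']) (auto simp: ladder_E_eq vertices_north_south_edge)
    ultimately show ?thesis
      by simp
  qed
qed

lemma ladder_edges_notin_perfect_matching:
  assumes M: "M \<in> perfect_matchings m" and "m < k"
  shows "rung k \<notin> M" and "north_edge k \<notin> M" and "south_edge k \<notin> M"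
proof -
  have no_k: "(b, k) \<notin> e" if "e \<in> M" for b e
  proof
    assume "(b, k) \<in> e"
    with that perfect_matchingsD(1)[OF M] have "k \<le> m"
      using ladder_edge_vertex_le by blast
    with \<open>m < k\<close> show False
      by simp
  qed
  show "rung k \<notin> M"
    using no_k[of "rung k" True] by auto
  show "north_edge k \<notin> M"
    using no_k[of "north_edge k" True] by auto
  show "south_edge k \<notin> M"
    using no_k[of "south_edge k" False] by auto
qed

lemma ladder_wt_eq:
  "ladder_wt y a m e =
     (\<Sum>k\<in>{1..m}. if e = north_edge k then y (a + int k) else 0)
   + (\<Sum>k\<in>{1..m}. if e = south_edge k then y (a + int k - 2) else 0)
   + (\<Sum>k\<in>{0..m}. if e = rung k then 1 else 0)"
  by (simp add: ladder_wt_def north_edge_def south_edge_def rung_def)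

lemma ladder_wt_north_edge:
  assumes "1 \<le> k" "k \<le> m"
  shows "ladder_wt y a m (north_edge k) = y (a + int k)"
proof -
  have "(\<Sum>j\<in>{1..m}. if north_edge k = north_edge j then y (a + int j) else 0) =
      (\<Sum>j\<in>{1..m}. if j = k then y (a + int j) else 0)"
    using assms by (intro sum.cong) auto
  with assms show ?thesis
    by (simp add: ladder_wt_eq)
qed

lemma ladder_wt_south_edge:
  assumes "1 \<le> k" "k \<le> m"
  shows "ladder_wt y a m (south_edge k) = y (a + int k - 2)"
proof -
  have "(\<Sum>j\<in>{1..m}. if south_edge k = south_edge j then y (a + int j - 2) else 0) =
      (\<Sum>j\<in>{1..m}. if j = k then y (a + int j - 2) else 0)"
    using assms by (intro sum.cong) auto
  with assms show ?thesis
    by (simp add: ladder_wt_eq)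
qed

lemma ladder_wt_rung: "k \<le> m \<Longrightarrow> ladder_wt y a m (rung k) = 1"
  by (simp add: ladder_wt_eq)

lemma ladder_wt_mono:
  assumes "e \<in> ladder_E n" and "n \<le> m"
  shows "ladder_wt y a m e = ladder_wt y a n e"
  using assms by (auto simp: ladder_E_eq ladder_wt_north_edge ladder_wt_south_edge ladder_wt_rung)

lemma prod_ladder_wt_mono:
  assumes "M \<in> perfect_matchings n" and "n \<le> m"
  shows "(\<Prod>e\<in>M. ladder_wt y a m e) = (\<Prod>e\<in>M. ladder_wt y a n e)"
  using assms perfect_matchingsD(1) ladder_wt_mono by (intro prod.cong) blast+

definition ladder_matching_sum :: "(int \<Rightarrow> real) \<Rightarrow> int \<Rightarrow> nat \<Rightarrow> real" where
  "ladder_matching_sum y a m = (\<Sum>M\<in>perfect_matchings m. \<Prod>e\<in>M. ladder_wt y a m e)"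

lemma ladder_matching_sum_0: "ladder_matching_sum y a 0 = 1"
  by (simp add: ladder_matching_sum_def perfect_matchings_0 ladder_wt_rung)

lemma ladder_matching_sum_1: "ladder_matching_sum y a 1 = 1 + y (a + 1) * y (a - 1)"
proof -
  have "north_edge 1 \<notin> {rung 0, rung 1}"
    by simp
  then have "{rung 0, rung 1} \<noteq> {north_edge 1, south_edge 1}"
    by blast
  then show ?thesis
    unfolding ladder_matching_sum_def perfect_matchings_1
    by (simp add: ladder_wt_rung ladder_wt_north_edge ladder_wt_south_edge)
qed

lemma ladder_matching_sum_Suc_Suc:
  "ladder_matching_sum y a (Suc (Suc n)) =
     ladder_matching_sum y a (Suc n) + y (a + int n + 2) * y (a + int n) * ladder_matching_sum y a n"
proof -
  let ?m = "Suc (Suc n)"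
  let ?w = "ladder_wt y a ?m" and ?R = "insert (rung ?m)"
    and ?NS = "\<lambda>M. M \<union> {north_edge ?m, south_edge ?m}"
  have inj_R: "inj_on ?R (perfect_matchings (Suc n))"
  proof (rule inj_onI)
    fix M M' assume "M \<in> perfect_matchings (Suc n)" "M' \<in> perfect_matchings (Suc n)" "?R M = ?R M'"
    then show "M = M'"
      using ladder_edges_notin_perfect_matching(1)[of _ "Suc n" ?m] by (simp add: insert_ident)
  qed
  have inj_NS: "inj_on ?NS (perfect_matchings n)"
  proof (rule inj_onI)
    fix M M' assume "M \<in> perfect_matchings n" "M' \<in> perfect_matchings n" "?NS M = ?NS M'"
    moreover have "N = ?NS N - {north_edge ?m, south_edge ?m}" if "N \<in> perfect_matchings n" for N
      using ladder_edges_notin_perfect_matching(2,3)[OF that, of ?m] by auto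
    ultimately show "M = M'"
      by metis
  qed
  have disjoint: "?R ` perfect_matchings (Suc n) \<inter> ?NS ` perfect_matchings n = {}"
  proof (rule equals0I)
    fix X assume X: "X \<in> ?R ` perfect_matchings (Suc n) \<inter> ?NS ` perfect_matchings n"
    then have "rung ?m \<in> X"
      by blast
    moreover obtain M where "M \<in> perfect_matchings n" "X = ?NS M"
      using X by blast
    ultimately show False
      using ladder_edges_notin_perfect_matching(1)[of M n ?m] by simp
  qed
  have prod_R: "(\<Prod>e\<in>?R M. ?w e) = (\<Prod>e\<in>M. ladder_wt y a (Suc n) e)"
    if "M \<in> perfect_matchings (Suc n)" for M
  proof -
    have "(\<Prod>e\<in>?R M. ?w e) = ?w (rung ?m) * (\<Prod>e\<in>M. ?w e)"
      using finite_perfect_matching[OF that] ladder_edges_notin_perfect_matching(1)[OF that, of ?m]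
      by simp
    also have "\<dots> = (\<Prod>e\<in>M. ladder_wt y a (Suc n) e)"
      using prod_ladder_wt_mono[OF that, of ?m] by (simp add: ladder_wt_rung)
    finally show ?thesis .
  qed
  have prod_NS: "(\<Prod>e\<in>?NS M. ?w e) = y (a + int n + 2) * y (a + int n) * (\<Prod>e\<in>M. ladder_wt y a n e)"
    if "M \<in> perfect_matchings n" for M
  proof -
    have "?NS M = insert (north_edge ?m) (insert (south_edge ?m) M)"
      by blast
    then have "(\<Prod>e\<in>?NS M. ?w e) = ?w (north_edge ?m) * ?w (south_edge ?m) * (\<Prod>e\<in>M. ?w e)"
      using finite_perfect_matching[OF that] ladder_edges_notin_perfect_matching(2,3)[OF that, of ?m]
      by simp
    also have "\<dots> = y (a + int n + 2) * y (a + int n) * (\<Prod>e\<in>M. ladder_wt y a n e)"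
      using prod_ladder_wt_mono[OF that, of ?m]
      by (simp add: ladder_wt_north_edge ladder_wt_south_edge ac_simps)
    finally show ?thesis .
  qed
  have "ladder_matching_sum y a ?m =
      (\<Sum>M\<in>?R ` perfect_matchings (Suc n). \<Prod>e\<in>M. ?w e) + (\<Sum>M\<in>?NS ` perfect_matchings n. \<Prod>e\<in>M. ?w e)"
    unfolding ladder_matching_sum_def perfect_matchings_Suc_Suc
    by (rule sum.union_disjoint[OF finite_imageI finite_imageI disjoint]) (rule finite_perfect_matchings)+
  also have "\<dots> = (\<Sum>M\<in>perfect_matchings (Suc n). \<Prod>e\<in>?R M. ?w e)
      + (\<Sum>M\<in>perfect_matchings n. \<Prod>e\<in>?NS M. ?w e)"
    by (simp only: sum.reindex[OF inj_R] sum.reindex[OF inj_NS] o_def)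
  also have "\<dots> = ladder_matching_sum y a (Suc n) + y (a + int n + 2) * y (a + int n) * ladder_matching_sum y a n"
    unfolding ladder_matching_sum_def sum_distrib_left
    using sum.cong[OF refl prod_R, of "perfect_matchings (Suc n)"]
      sum.cong[OF refl prod_NS, of "perfect_matchings n"]
    by simp
  finally show ?thesis .
qed

section \<open>The matching polynomial as a continuant\<close>

definition tile_weight :: "(int \<Rightarrow> 'a::times) \<Rightarrow> int \<Rightarrow> 'a" where
  "tile_weight y i = y (i + 1) * y (i - 1)"

lemma ladder_matching_sum_eq_continuant:
  "ladder_matching_sum y a m = continuant (map (\<lambda>k. tile_weight y (a + int k)) [0..<m])"
proof (induction m rule: induct_nat_012)
  case 0
  then show ?case
    by (simp add: ladder_matching_sum_0)
next
  case 1
  then show ?case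
    using ladder_matching_sum_1[of y a] by (simp add: tile_weight_def)
next
  case (ge2 n)
  have "map (\<lambda>k. tile_weight y (a + int k)) [0..<Suc (Suc n)] =
      map (\<lambda>k. tile_weight y (a + int k)) [0..<n] @ [tile_weight y (a + int n), tile_weight y (a + int n + 1)]"
    by (simp add: ac_simps)
  with ge2 show ?case
    by (simp add: ladder_matching_sum_Suc_Suc continuant_snoc_snoc tile_weight_def ac_simps)
qed

lemma P_ladder_eq_continuant: "P_ladder y a b = continuant (map (tile_weight y) [a..b])"
  unfolding P_ladder_def Let_def ladder_matching_sum_def[symmetric] ladder_matching_sum_eq_continuant
  by (simp add: upto_eq_map_upt[of a b] comp_def)

lemma Q_ladder_eq_continuant:
  "Q_ladder y a b = continuant (map (tile_weight y) [a..b]) / prod_list (map y [a..b])"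
  using prod.distinct_set_conv_list[of "[a..b]" y] by (simp add: Q_ladder_def P_ladder_eq_continuant)

lemma Q_ladder_reflect: "Q_ladder (\<lambda>i. y (r - i)) a b = Q_ladder y (r - b) (r - a)"
proof -
  have "map (tile_weight (\<lambda>i. y (r - i))) [a..b] = map (\<lambda>i. tile_weight y (r - i)) [a..b]"
    by (simp add: tile_weight_def algebra_simps)
  then show ?thesis
    by (simp add: Q_ladder_eq_continuant map_upto_reflect continuant_rev)
qed

section \<open>Odd specializations\<close>

lemma upto_centre_split:
  assumes "int n + 1 \<le> b"
  shows "[- int n - 1..b] = [- int n - 1..-2] @ [-1, 0, 1] @ [2..int n + 1] @ [int n + 2..b]"
proof -
  have "[- int n - 1..b] = [- int n - 1..-2] @ [-1..b]"
    using upto_append[of "- int n - 1" "-2" b] assms by simp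
  also have "[-1..b] = [-1, 0, 1] @ [2..b]"
    using assms by (simp add: upto_rec1)
  also have "[2..b] = [2..int n + 1] @ [int n + 2..b]"
    using upto_append[of 2 "int n + 1" b] assms by (simp add: add.assoc)
  finally show ?thesis .
qed

lemma tile_weight_fun_upd: "i \<noteq> 1 \<Longrightarrow> i \<noteq> -1 \<Longrightarrow> tile_weight (y(0 := t)) i = tile_weight y i"
  by (simp add: tile_weight_def)

lemma tile_weight_odd:
  fixes y :: "int \<Rightarrow> 'a::comm_ring_1"
  assumes "\<And>i. y (- i) = - y i"
  shows "tile_weight y (- i) = tile_weight y i"
  using assms[of "i - 1"] assms[of "i + 1"] by (simp add: tile_weight_def mult.commute)

lemma map_tile_weight_odd_fun_upd:
  fixes y :: "int \<Rightarrow> 'a::comm_ring_1"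
  assumes odd: "\<And>i. y (- i) = - y i" and "y 1 = 1" and "int n + 1 \<le> b"
  shows "map (tile_weight (y(0 := t))) [- int n - 1..b] =
    rev (map (tile_weight y) [2..int n + 1]) @ [- (t * y 2), -1, t * y 2]
    @ map (tile_weight y) [2..int n + 1] @ map (tile_weight y) [int n + 2..b]"
proof -
  have "map (tile_weight (y(0 := t))) [- int n - 1..-2] = map (tile_weight y) [- int n - 1..-2]"
    by (rule map_cong) (auto simp: tile_weight_fun_upd)
  also have "\<dots> = rev (map (tile_weight y) [2..int n + 1])"
    using map_upto_reflect[of "tile_weight y" 0 "- int n - 1" "-2"] by (simp add: tile_weight_odd[of y, OF odd] add.commute)
  finally have left: "map (tile_weight (y(0 := t))) [- int n - 1..-2] = rev (map (tile_weight y) [2..int n + 1])" .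
  have right: "map (tile_weight (y(0 := t))) [2..int n + 1] = map (tile_weight y) [2..int n + 1]"
    "map (tile_weight (y(0 := t))) [int n + 2..b] = map (tile_weight y) [int n + 2..b]"
    by (auto intro!: map_cong simp: tile_weight_fun_upd)
  have centre: "map (tile_weight (y(0 := t))) [-1, 0, 1] = [- (t * y 2), -1, t * y 2]"
    using odd[of 2] odd[of 1] \<open>y 1 = 1\<close> by (simp add: tile_weight_def mult.commute)
  show ?thesis
    by (simp only: upto_centre_split[OF \<open>int n + 1 \<le> b\<close>] map_append left right centre)
qed

lemma prod_odd_fun_upd:
  fixes y :: "int \<Rightarrow> 'a::comm_ring_1"
  assumes odd: "\<And>i. y (- i) = - y i" and "y 1 = 1" and "int n + 1 \<le> b"
  shows "prod_list (map (y(0 := t)) [- int n - 1..b]) =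
    (-1) ^ (n + 1) * t * (prod_list (map y [2..int n + 1]))\<^sup>2 * prod_list (map y [int n + 2..b])"
proof -
  have "map y [- int n - 1..-2] = rev (map (\<lambda>i. - y i) [2..int n + 1])"
    using map_upto_reflect[of "\<lambda>i. - y i" 0 "- int n - 1" "-2"] by (simp add: odd add.commute)
  then have "prod_list (map y [- int n - 1..-2]) = (-1) ^ n * prod_list (map y [2..int n + 1])"
    by (simp add: prod_list_map_uminus)
  moreover have "map (y(0 := t)) [- int n - 1..-2] = map y [- int n - 1..-2]"
    "map (y(0 := t)) [2..int n + 1] = map y [2..int n + 1]"
    "map (y(0 := t)) [int n + 2..b] = map y [int n + 2..b]"
    by (auto intro: map_cong)
  moreover have "y (-1) = -1"
    using odd[of 1] \<open>y 1 = 1\<close> by simp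
  ultimately show ?thesis
    using \<open>y 1 = 1\<close> by (simp add: upto_centre_split[OF \<open>int n + 1 \<le> b\<close>] power2_eq_square)
qed

lemma prod_tile_weight_upto:
  fixes y :: "int \<Rightarrow> 'a::comm_ring_1"
  assumes "y 1 = 1"
  shows "y 2 * prod_list (map (tile_weight y) [2..int n + 1]) * y (int n + 1) =
    (prod_list (map y [2..int n + 1]))\<^sup>2 * y (int n + 2)"
proof (induction n)
  case 0
  then show ?case
    using assms by simp
next
  case (Suc n)
  have "[2..int (Suc n) + 1] = [2..int n + 1] @ [int n + 2]"
    by (simp add: upto_rec2 ac_simps)
  then have "y 2 * prod_list (map (tile_weight y) [2..int (Suc n) + 1]) * y (int (Suc n) + 1) =
      (y 2 * prod_list (map (tile_weight y) [2..int n + 1]) * y (int n + 1)) * y (int n + 3) * y (int n + 2)"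
    by (simp add: tile_weight_def algebra_simps)
  also have "\<dots> = (prod_list (map y [2..int (Suc n) + 1]))\<^sup>2 * y (int (Suc n) + 2)"
    unfolding Suc.IH using \<open>[2..int (Suc n) + 1] = _\<close> by (simp add: power2_eq_square algebra_simps)
  finally show ?case .
qed

section \<open>The limits\<close>

lemma affine_LIM_0:
  fixes F :: "real \<Rightarrow> real"
  assumes "\<And>t. t \<noteq> 0 \<Longrightarrow> F t = \<alpha> + \<beta> * t"
  shows "F \<midarrow>0\<rightarrow> \<alpha>"
proof -
  have "(\<lambda>t. \<alpha> + \<beta> * t) \<midarrow>0\<rightarrow> \<alpha> + \<beta> * 0"
    by (intro tendsto_intros)
  then show ?thesis
    using LIM_cong[of 0 0 F "\<lambda>t. \<alpha> + \<beta> * t" \<alpha> \<alpha>] assms by simp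
qed

lemma Q_ladder_odd_LIM:
  fixes y :: "int \<Rightarrow> real"
  assumes odd: "\<And>i. y (- i) = - y i" and y1: "y 1 = 1" and nonzero: "\<And>i. i \<noteq> 0 \<Longrightarrow> y i \<noteq> 0"
    and b: "int n + 2 \<le> b"
  shows "(\<lambda>t. Q_ladder (y(0 := t)) (- int n - 1) b) \<midarrow>0\<rightarrow>
    y (int n + 3) * continuant (map (tile_weight y) [int n + 4..b]) / prod_list (map y [int n + 3..b])"
proof -
  define V where "V = map (tile_weight y) [2..int n + 1]"
  define W where "W = map (tile_weight y) [int n + 2..b]"
  define K where "K = continuant (map (tile_weight y) [int n + 4..b])"
  define P where "P = prod_list (map y [2..int n + 1])"
  define R where "R = prod_list (map y [int n + 3..b])"
  define D where "D = (-1) ^ (n + 1) * P\<^sup>2 * y (int n + 2) * R"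
  have "P \<noteq> 0" "R \<noteq> 0"
    using nonzero by (auto simp: P_def R_def prod_list_zero_iff)
  then have "D \<noteq> 0"
    using nonzero[of "int n + 2"] by (simp add: D_def)
  have W: "W = tile_weight y (int n + 2) # map (tile_weight y) [int n + 3..b]"
    using b by (simp add: W_def upto_rec1 ac_simps)
  have KW: "continuant W - continuant (tl W) = y (int n + 3) * y (int n + 1) * K"
  proof -
    have "tl (map (tile_weight y) [int n + 3..b]) = map (tile_weight y) [int n + 4..b]"
      by (simp add: map_tl[symmetric] tl_upto add.assoc)
    then show ?thesis
      by (simp add: W continuant_Cons K_def tile_weight_def ac_simps)
  qed
  have "length V = n"
    by (simp add: V_def)
  have prod_V: "y 2 * prod_list V * y (int n + 1) = P\<^sup>2 * y (int n + 2)"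
    unfolding V_def P_def using y1 by (rule prod_tile_weight_upto)
  show ?thesis
  proof (rule affine_LIM_0[where \<beta> = "- (y 2)\<^sup>2 * continuant (tl V) * continuant (tl (V @ W)) / D"])
    fix t :: real assume "t \<noteq> 0"
    have "continuant (rev V @ [- (t * y 2), -1, t * y 2] @ V @ W) =
        (-1) ^ (n + 1) * t * y (int n + 3) * K * (y 2 * prod_list V * y (int n + 1))
        - t\<^sup>2 * (y 2)\<^sup>2 * continuant (tl V) * continuant (tl (V @ W))"
      unfolding continuant_mirrored KW \<open>length V = n\<close> by (simp add: power_mult_distrib algebra_simps)
    also have "\<dots> = t * D * (y (int n + 3) * K / R)
        - t\<^sup>2 * (y 2)\<^sup>2 * continuant (tl V) * continuant (tl (V @ W))"
      using \<open>R \<noteq> 0\<close> by (simp add: prod_V D_def)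
    finally have numerator: "continuant (rev V @ [- (t * y 2), -1, t * y 2] @ V @ W) = \<dots>" .
    have denominator: "prod_list (map (y(0 := t)) [- int n - 1..b]) = t * D"
      using prod_odd_fun_upd[OF odd y1, of n b t] b
      by (simp add: D_def P_def R_def upto_rec1 algebra_simps)
    have "int n + 1 \<le> b"
      using b by simp
    have "Q_ladder (y(0 := t)) (- int n - 1) b =
        continuant (rev V @ [- (t * y 2), -1, t * y 2] @ V @ W) / (t * D)"
      unfolding Q_ladder_eq_continuant denominator
        map_tile_weight_odd_fun_upd[OF odd y1 \<open>int n + 1 \<le> b\<close>] V_def W_def ..
    also have "\<dots> = y (int n + 3) * K / R + - (y 2)\<^sup>2 * continuant (tl V) * continuant (tl (V @ W)) / D * t"
      unfolding numerator using \<open>t \<noteq> 0\<close> \<open>D \<noteq> 0\<close> by (simp add: field_simps power2_eq_square)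
    finally show "Q_ladder (y(0 := t)) (- int n - 1) b =
        y (int n + 3) * continuant (map (tile_weight y) [int n + 4..b]) / prod_list (map y [int n + 3..b])
        + - (y 2)\<^sup>2 * continuant (tl V) * continuant (tl (V @ W)) / D * t"
      by (simp only: K_def R_def)
  qed
qed

lemma Q_ladder_odd_0_1:
  fixes y :: "int \<Rightarrow> real"
  assumes "\<And>i. y (- i) = - y i" and "y 1 = 1" and "t \<noteq> 0"
  shows "Q_ladder (y(0 := t)) 0 1 = y 2"
  using assms(1)[of 1] assms(2,3) by (simp add: Q_ladder_eq_continuant tile_weight_def upto_rec1)

lemma Q_ladder_1_1:
  fixes y :: "int \<Rightarrow> real"
  assumes "y 1 = 1"
  shows "Q_ladder (y(0 := t)) 1 1 = 1 + y 2 * t"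
  using assms by (simp add: Q_ladder_eq_continuant tile_weight_def upto_rec1)

lemma Q_ladder_odd_0_2:
  fixes y :: "int \<Rightarrow> real"
  assumes "\<And>i. y (- i) = - y i" and "y 1 = 1" and "y 2 \<noteq> 0" and "t \<noteq> 0"
  shows "Q_ladder (y(0 := t)) 0 2 = 1"
  using assms(1)[of 1] assms(2-4) by (simp add: Q_ladder_eq_continuant tile_weight_def upto_rec1)

lemma spec1_odd_specialization:
  assumes "\<forall>n\<ge>2. f n \<noteq> 0"
  defines "y \<equiv> spec1 f 0"
  shows "spec1 f = (\<lambda>t. y(0 := t))" and "y (- i) = - y i" and "y 1 = 1"
    and "i \<noteq> 0 \<Longrightarrow> y i \<noteq> 0"
proof -
  show "spec1 f = (\<lambda>t. y(0 := t))"
    unfolding y_def by (intro ext) (simp add: spec1_def)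
  show "y 1 = 1"
    by (simp add: y_def spec1_def)
  have f_nonzero: "f (nat i) \<noteq> 0" if "2 \<le> i" for i
    using assms that by simp
  consider "i = 0" | "i = 1" | "i = -1" | "i \<ge> 2" | "i \<le> -2"
    by linarith
  then show "y (- i) = - y i"
    by cases (simp_all add: y_def spec1_def)
  show "y i \<noteq> 0" if "i \<noteq> 0"
    using that f_nonzero[of i] f_nonzero[of "- i"] by (simp add: y_def spec1_def)
qed

lemma spec1_LIM_even:
  assumes "\<forall>n\<ge>2. f n \<noteq> 0"
  shows "(\<lambda>t. Q_ladder (spec1 f t) (- int j) (int j + 1)) \<midarrow>0\<rightarrow> f (j + 2)"
proof -
  define y where "y = spec1 f 0"
  note spec1 = spec1_odd_specialization[OF assms, folded y_def]
  note odd = spec1(2) and y1 = spec1(3) and nonzero = spec1(4)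
  have y_j: "y (int j + 2) = f (j + 2)"
    by (simp add: y_def spec1_def nat_add_distrib)
  have "(\<lambda>t. Q_ladder (y(0 := t)) (- int j) (int j + 1)) \<midarrow>0\<rightarrow> y (int j + 2)"
  proof (cases j)
    case 0
    then show ?thesis
      using Q_ladder_odd_0_1[OF odd y1] by (intro affine_LIM_0[where \<beta> = 0]) simp
  next
    case (Suc n)
    have "(\<lambda>t. Q_ladder (y(0 := t)) (- int n - 1) (int n + 2)) \<midarrow>0\<rightarrow> y (int n + 3)"
      using Q_ladder_odd_LIM[OF odd y1 nonzero, of n "int n + 2"] by simp
    moreover have "- int j = - int n - 1" "int j + 1 = int n + 2" "int j + 2 = int n + 3"
      using Suc by simp_all
    ultimately show ?thesis
      by (simp only:)
  qed
  then show ?thesis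
    unfolding spec1(1) y_j .
qed

lemma spec1_LIM_odd:
  assumes "\<forall>n\<ge>2. f n \<noteq> 0"
  shows "(\<lambda>t. Q_ladder (spec1 f t) (1 - int k) (1 + int k)) \<midarrow>0\<rightarrow> 1"
proof -
  define y where "y = spec1 f 0"
  note spec1 = spec1_odd_specialization[OF assms, folded y_def]
  note odd = spec1(2) and y1 = spec1(3) and nonzero = spec1(4)
  consider "k = 0" | "k = 1" | n where "k = n + 2"
    by (metis add_2_eq_Suc' not0_implies_Suc One_nat_def)
  then have "(\<lambda>t. Q_ladder (y(0 := t)) (1 - int k) (1 + int k)) \<midarrow>0\<rightarrow> 1"
  proof cases
    case 1
    then show ?thesis
      using Q_ladder_1_1[of y, OF y1] by (intro affine_LIM_0[where \<beta> = "y 2"]) simp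
  next
    case 2
    then show ?thesis
      using Q_ladder_odd_0_2[OF odd y1 nonzero] by (intro affine_LIM_0[where \<beta> = 0]) simp
  next
    case 3
    have "(\<lambda>t. Q_ladder (y(0 := t)) (- int n - 1) (int n + 3)) \<midarrow>0\<rightarrow> 1"
      using Q_ladder_odd_LIM[OF odd y1 nonzero, of n "int n + 3"] nonzero[of "int n + 3"] by simp
    moreover have "1 - int k = - int n - 1" "1 + int k = int n + 3"
      using 3 by simp_all
    ultimately show ?thesis
      by (simp only:)
  qed
  then show ?thesis
    unfolding spec1(1) .
qed

lemma spec2_eq_spec1_reflect: "spec2 N g s = (\<lambda>i. spec1 (\<lambda>n. g (N + 1 - int n)) s (N + 1 - i))"
proof
  fix i :: int
  consider "i \<le> N - 1" | "i = N" | "i = N + 1" | "i = N + 2" | "i \<ge> N + 3"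
    by linarith
  then show "spec2 N g s i = spec1 (\<lambda>n. g (N + 1 - int n)) s (N + 1 - i)"
  proof cases
    case 1
    then show ?thesis
      by (simp add: spec1_def spec2_def)
  next
    case 5
    then have "N + 1 - int (nat (i - N - 1)) = 2 * N + 2 - i"
      by simp
    with 5 show ?thesis
      by (simp add: spec1_def spec2_def add_diff_eq)
  qed (simp_all add: spec1_def spec2_def)
qed

lemma spec2_LIM:
  assumes "\<forall>k\<le>N - 1. g k \<noteq> 0"
  shows "(\<lambda>s. Q_ladder (spec2 N g s) (N - int k) (N + int k)) \<midarrow>0\<rightarrow> 1"
proof -
  let ?f = "\<lambda>n. g (N + 1 - int n)"
  have "\<forall>n\<ge>2. ?f n \<noteq> 0"
    using assms by auto
  moreover have "Q_ladder (spec2 N g s) (N - int k) (N + int k) =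
      Q_ladder (spec1 ?f s) (1 - int k) (1 + int k)" for s
    unfolding spec2_eq_spec1_reflect Q_ladder_reflect by simp
  ultimately show ?thesis
    using spec1_LIM_odd[of ?f k] by simp
qed

theorem lemma3:
  fixes f :: "nat \<Rightarrow> real" and g :: "int \<Rightarrow> real" and N :: int
  assumes "\<forall>n\<ge>2. f n \<noteq> 0"
    and "\<forall>k\<le>N - 1. g k \<noteq> 0"
  shows "(\<forall>j::nat. ((\<lambda>t. Q_ladder (spec1 f t) (- int j) (int j + 1)) \<longlongrightarrow> f (j + 2)) (at 0))
       \<and> (\<forall>k::nat. ((\<lambda>t. Q_ladder (spec1 f t) (1 - int k) (1 + int k)) \<longlongrightarrow> 1) (at 0))
       \<and> (\<forall>k::nat. ((\<lambda>s. Q_ladder (spec2 N g s) (N - int k) (N + int k)) \<longlongrightarrow> 1) (at 0))"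
  using spec1_LIM_even[OF assms(1)] spec1_LIM_odd[OF assms(1)] spec2_LIM[OF assms(2)] by blast

end
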